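(* If $\mathrm{char}(\Bbbk)=0$ or $\mathrm{char}(\Bbbk)\ge5$, then $F=\{f_1,f_2,f_3,f_4\}$, where $f_1=3y^3-4xyz+x^4-3y^3z^5-2xy^6z^2-x^2y^4z^3$, $f_2=2y^2z-3xz^2+x^3y-2y^7z^2-xy^5z^3$, $f_3=yz^2-3x^2y^2+2x^3z-y^6z^3-2xy^4z^4$, $f_4=z^3-2xy^3+x^2yz-y^5z^4$, is a standard basis of $P$ with respect to the negative degree reverse lexicographic order $>_{\rm ds}$.
   Context: $\Bbbk$ is a field, $\rho:\Bbbk[[x,y,z]]\to\Bbbk[[t]]$ is the $\Bbbk$-algebra morphism with $\rho(x)=t^6+t^{31}$, $\rho(y)=t^8$, $\rho(z)=t^{10}$, and $P=\ker\rho$. The order $>_{\rm ds}$ on monomials $x^\alpha=x^{\alpha_1}y^{\alpha_2}z^{\alpha_3}$: $x^\alpha>_{\rm ds}x^\beta$ iff $|\alpha|<|\beta|$, or $|\alpha|=|\beta|$ and there is $i\in\{1,2\}$ with $\alpha_3=\beta_3,\ldots,\alpha_{i+1}=\beta_{i+1}$ and $\alpha_i<\beta_i$ (so $1>x>y>z>x^2>xy>y^2>xz>yz>z^2>\cdots$). For $0\ne f\in\Bbbk[[x,y,z]]$, the leading monomial $\mathrm{LM}(f)$ is the $>_{\rm ds}$-largest monomial in the support of $f$. A finite set $G\subseteq I$ is a standard basis of an ideal $I\subseteq\Bbbk[[x,y,z]]$ if the ideal generated by $\{\mathrm{LM}(g):g\in G,g\neq0\}$ equals the ideal generated by $\{\mathrm{LM}(f):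 f\in I, f\ne0\}$. *)

theory Defs
  imports "HOL-Computational_Algebra.Formal_Power_Series"
begin

text \<open>The power series ring k[[x,y,z]] is modelled as the nested formal power series
  type ('a fps) fps fps: the outermost index is the exponent of z, the middle one of y,
  the innermost one of x.\<close>

type_synonym 'a ps3 = "'a fps fps fps"

definition vx :: "'a::comm_ring_1 ps3" where "vx = fps_const (fps_const fps_X)"
definition vy :: "'a::comm_ring_1 ps3" where "vy = fps_const fps_X"
definition vz :: "'a::comm_ring_1 ps3" where "vz = fps_X"

definition coeff3 :: "'a::comm_ring_1 ps3 \<Rightarrow> nat \<times> nat \<times> nat \<Rightarrow> 'a" where
  "coeff3 f \<alpha> = (case \<alpha> of (a, b, c) \<Rightarrow> fps_nth (fps_nth (fps_nth f c) b) a)"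

definition mon3 :: "nat \<times> nat \<times> nat \<Rightarrow> 'a::comm_ring_1 ps3" where
  "mon3 \<alpha> = (case \<alpha> of (a, b, c) \<Rightarrow> vx ^ a * vy ^ b * vz ^ c)"

text \<open>The substitution morphism rho: x \<mapsto> t^6+t^31, y \<mapsto> t^8, z \<mapsto> t^10.
  Monomial x^a y^b z^c maps to a series of order 6a+8b+10c \<ge> a+b+c, so only
  exponents a,b,c \<le> n contribute to the coefficient of t^n.\<close>
definition rho :: "'a::comm_ring_1 ps3 \<Rightarrow> 'a fps" where
  "rho f = Abs_fps (\<lambda>n. \<Sum>a\<le>n. \<Sum>b\<le>n. \<Sum>c\<le>n.
      coeff3 f (a, b, c) * fps_nth ((fps_X ^ 6 + fps_X ^ 31) ^ a * fps_X ^ (8 * b) * fps_X ^ (10 * c)) n)"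

definition Pker :: "'a::comm_ring_1 ps3 set" where
  "Pker = {f. rho f = 0}"

text \<open>Negative degree reverse lexicographic order: ds_gr \<alpha> \<beta> means x^\<alpha> >_ds x^\<beta>.\<close>
definition ds_gr :: "nat \<times> nat \<times> nat \<Rightarrow> nat \<times> nat \<times> nat \<Rightarrow> bool" where
  "ds_gr \<alpha> \<beta> = (case \<alpha> of (a1, a2, a3) \<Rightarrow> case \<beta> of (b1, b2, b3) \<Rightarrow>
      a1 + a2 + a3 < b1 + b2 + b3 \<or>
      (a1 + a2 + a3 = b1 + b2 + b3 \<and>
        (a3 < b3 \<or> (a3 = b3 \<and> a2 < b2) \<or> (a3 = b3 \<and> a2 = b2 \<and> a1 < b1))))"

definition LE3 :: "'a::comm_ring_1 ps3 \<Rightarrow> nat \<times> nat \<times> nat" where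
  "LE3 f = (THE \<alpha>. coeff3 f \<alpha> \<noteq> 0 \<and> (\<forall>\<beta>. coeff3 f \<beta> \<noteq> 0 \<and> \<beta> \<noteq> \<alpha> \<longrightarrow> ds_gr \<alpha> \<beta>))"

definition LM3 :: "'a::comm_ring_1 ps3 \<Rightarrow> 'a ps3" where
  "LM3 f = mon3 (LE3 f)"

definition ideal_gen :: "'a::comm_ring_1 set \<Rightarrow> 'a set" where
  "ideal_gen S = module.span ((*) :: 'a \<Rightarrow> 'a \<Rightarrow> 'a) S"

definition standard_basis :: "'a::comm_ring_1 ps3 set \<Rightarrow> 'a ps3 set \<Rightarrow> bool" where
  "standard_basis G I \<longleftrightarrow> finite G \<and> G \<subseteq> I \<and>
     ideal_gen {LM3 g | g. g \<in> G \<and> g \<noteq> 0} = ideal_gen {LM3 f | f. f \<in> I \<and> f \<noteq> 0}"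

definition f1 :: "'a::comm_ring_1 ps3" where
  "f1 = 3 * vy^3 - 4 * vx * vy * vz + vx^4 - 3 * vy^3 * vz^5 - 2 * vx * vy^6 * vz^2
        - vx^2 * vy^4 * vz^3"
definition f2 :: "'a::comm_ring_1 ps3" where
  "f2 = 2 * vy^2 * vz - 3 * vx * vz^2 + vx^3 * vy - 2 * vy^7 * vz^2 - vx * vy^5 * vz^3"
definition f3 :: "'a::comm_ring_1 ps3" where
  "f3 = vy * vz^2 - 3 * vx^2 * vy^2 + 2 * vx^3 * vz - vy^6 * vz^3 - 2 * vx * vy^4 * vz^4"
definition f4 :: "'a::comm_ring_1 ps3" where
  "f4 = vz^3 - 2 * vx * vy^3 + vx^2 * vy * vz - vy^5 * vz^4"

end

theory Submission
  imports Defs "HOL-Library.Product_Lexorder"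
begin

text \<open>
  The substitution sends x^a y^b z^c to t^w (1 + t^25)^a with weight w = 6a + 8b + 10c. Each f_i
  thus maps to t^w times a polynomial in t^25 that vanishes identically, and its leading monomial
  is one of y^3, y^2 z, y z^2, z^3, which generate (y, z)^3. Conversely, let f in P have leading
  exponent (a, b, c) with b + c \<le> 2. An exponent ds-below (a, b, c) that contributes to the
  coefficient of t^w or t^(w+25) of rho f has weight exactly w, because its weight is at least
  six times its degree while (1 + t^25)^a only contributes in steps of 25. Besides (a, b, c) there
  is at most one such exponent, and its x-exponent a' exceeds a by 1, 2 or 3. The two coefficients
  give c + c' = 0 and a c + a' c' = 0, so (a' - a) c = 0, which forces c = 0 when 2 and 3 are
  invertible. Hence every leading monomial of P lies in (y, z)^3.
\<close>

lemma fps_nth_one_plus_X_power_power: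
  assumes "0 < k"
  shows "fps_nth ((1 + fps_X ^ k) ^ a :: 'a::comm_ring_1 fps) j
           = (if k dvd j then of_nat (a choose (j div k)) else 0)"
proof -
  have "(1 + fps_X ^ k) ^ a = (\<Sum>i\<le>a. of_nat (a choose i) * (fps_X ^ k) ^ i :: 'a fps)"
    by (subst add.commute) (simp add: binomial_ring mult_ac)
  then have "fps_nth ((1 + fps_X ^ k) ^ a :: 'a fps) j
      = (\<Sum>i\<le>a. if j = k * i then of_nat (a choose i) else 0)"
    by (simp add: fps_sum_nth flip: fps_of_nat power_mult)
      (auto intro!: sum.cong)
  also have "\<dots> = (if k dvd j then of_nat (a choose (j div k)) else 0)"
    using assms by (cases "k dvd j") (auto simp: binomial_eq_0 intro!: sum.neutral)
  finally show ?thesis .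
qed

definition weight :: "nat \<times> nat \<times> nat \<Rightarrow> nat" where
  "weight \<alpha> = (case \<alpha> of (a, b, c) \<Rightarrow> 6 * a + 8 * b + 10 * c)"

definition rho_mon :: "nat \<times> nat \<times> nat \<Rightarrow> 'a::comm_ring_1 fps" where
  "rho_mon \<alpha> = (case \<alpha> of (a, b, c) \<Rightarrow>
     (fps_X ^ 6 + fps_X ^ 31) ^ a * fps_X ^ (8 * b) * fps_X ^ (10 * c))"

lemma rho_mon_eq: "rho_mon \<alpha> = fps_X ^ weight \<alpha> * (1 + fps_X ^ 25) ^ fst \<alpha>"
proof (cases \<alpha>)
  case (fields a b c)
  have "(fps_X ^ 6 + fps_X ^ 31 :: 'a fps) = fps_X ^ 6 * (1 + fps_X ^ 25)"
    by (simp add: algebra_simps flip: power_add)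
  then show ?thesis
    by (simp add: fields rho_mon_def weight_def power_mult_distrib power_add mult.commute
        flip: power_mult)
qed

lemma fps_nth_rho_mon:
  "fps_nth (rho_mon \<alpha>) n = (if weight \<alpha> \<le> n \<and> 25 dvd n - weight \<alpha>
     then of_nat (fst \<alpha> choose ((n - weight \<alpha>) div 25)) else 0)"
  by (simp add: rho_mon_eq fps_X_power_mult_nth fps_nth_one_plus_X_power_power)

lemma fps_nth_rho:
  "fps_nth (rho f) n = (\<Sum>\<alpha>\<in>{..n} \<times> {..n} \<times> {..n}. coeff3 f \<alpha> * fps_nth (rho_mon \<alpha>) n)"
  unfolding rho_def rho_mon_def by (simp add: sum.cartesian_product split_def)

lemma fps_nth_rho_eq_sum:
  assumes "finite A" and "\<And>\<alpha>. coeff3 f \<alpha> * fps_nth (rho_mon \<alpha>) n \<noteq> 0 \<Longrightarrow> \<alpha> \<in> A"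
  shows "fps_nth (rho f) n = (\<Sum>\<alpha>\<in>A. coeff3 f \<alpha> * fps_nth (rho_mon \<alpha>) n)"
proof -
  let ?Q = "{..n} \<times> {..n} \<times> {..n}"
  have zero: "coeff3 f \<alpha> * fps_nth (rho_mon \<alpha>) n = 0" if "\<alpha> \<notin> ?Q" for \<alpha>
    using that by (cases \<alpha>) (auto simp: fps_nth_rho_mon weight_def)
  have "(\<Sum>\<alpha>\<in>?Q. coeff3 f \<alpha> * fps_nth (rho_mon \<alpha>) n)
      = (\<Sum>\<alpha>\<in>?Q \<union> A. coeff3 f \<alpha> * fps_nth (rho_mon \<alpha>) n)"
    by (rule sum.mono_neutral_left) (use assms(1) zero in auto)
  also have "\<dots> = (\<Sum>\<alpha>\<in>A. coeff3 f \<alpha> * fps_nth (rho_mon \<alpha>) n)"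
    using assms by (intro sum.mono_neutral_right) auto
  finally show ?thesis
    by (simp add: fps_nth_rho)
qed

lemma coeff3_add: "coeff3 (f + g) \<alpha> = coeff3 f \<alpha> + coeff3 g \<alpha>"
  by (cases \<alpha>) (simp add: coeff3_def)

lemma coeff3_diff: "coeff3 (f - g) \<alpha> = coeff3 f \<alpha> - coeff3 g \<alpha>"
  by (cases \<alpha>) (simp add: coeff3_def)

lemma coeff3_numeral_mult: "coeff3 (numeral k * f) \<alpha> = numeral k * coeff3 f \<alpha>"
  by (cases \<alpha>) (simp add: coeff3_def numeral_fps_const)

lemma coeff3_mon3: "coeff3 (mon3 \<beta>) \<alpha> = (if \<alpha> = \<beta> then 1 else 0)"
  by (cases \<alpha>; cases \<beta>)
    (simp add: coeff3_def mon3_def vx_def vy_def vz_def fps_X_power_mult_right_nth)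

lemmas coeff3_linear = coeff3_add coeff3_diff coeff3_numeral_mult coeff3_mon3

lemma coeff3_eq_0_iff: "(\<forall>\<alpha>. coeff3 f \<alpha> = 0) \<longleftrightarrow> f = 0"
  by (auto simp: coeff3_def fps_eq_iff)

lemma rho_add: "rho (f + g) = rho f + rho g"
  by (rule fps_ext) (simp add: fps_nth_rho coeff3_add algebra_simps sum.distrib)

lemma rho_diff: "rho (f - g) = rho f - rho g"
  by (rule fps_ext) (simp add: fps_nth_rho coeff3_diff algebra_simps sum_subtractf)

lemma rho_numeral_mult: "rho (numeral k * f) = numeral k * rho f"
proof (rule fps_ext)
  fix n
  have "fps_nth (rho (numeral k * f)) n = numeral k * fps_nth (rho f) n"
    unfolding fps_nth_rho coeff3_numeral_mult by (simp add: sum_distrib_left mult.assoc)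
  then show "fps_nth (rho (numeral k * f)) n = fps_nth (numeral k * rho f) n"
    by (simp add: numeral_fps_const)
qed

lemma rho_mon3: "rho (mon3 \<alpha>) = rho_mon \<alpha>"
proof (rule fps_ext)
  fix n
  have "fps_nth (rho (mon3 \<alpha>)) n = (\<Sum>\<beta>\<in>{\<alpha>}. coeff3 (mon3 \<alpha>) \<beta> * fps_nth (rho_mon \<beta>) n)"
    by (rule fps_nth_rho_eq_sum) (auto simp: coeff3_mon3 split: if_splits)
  then show "fps_nth (rho (mon3 \<alpha>)) n = fps_nth (rho_mon \<alpha>) n"
    by (simp add: coeff3_mon3)
qed

lemmas rho_linear = rho_add rho_diff rho_numeral_mult rho_mon3

definition ds_key :: "nat \<times> nat \<times> nat \<Rightarrow> nat \<times> nat \<times> nat" where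
  "ds_key \<alpha> = (case \<alpha> of (a, b, c) \<Rightarrow> (a + b + c, c, b))"

lemma ds_gr_iff_ds_key_less: "ds_gr \<alpha> \<beta> \<longleftrightarrow> ds_key \<alpha> < ds_key \<beta>"
  by (cases \<alpha>; cases \<beta>) (auto simp: ds_gr_def ds_key_def less_prod_def)

lemma inj_ds_key: "inj ds_key"
  by (rule injI) (auto simp: ds_key_def split: prod.splits)

definition is_lead_exp :: "'a::comm_ring_1 ps3 \<Rightarrow> nat \<times> nat \<times> nat \<Rightarrow> bool" where
  "is_lead_exp f \<alpha> \<longleftrightarrow> coeff3 f \<alpha> \<noteq> 0 \<and> (\<forall>\<beta>. coeff3 f \<beta> \<noteq> 0 \<and> \<beta> \<noteq> \<alpha> \<longrightarrow> ds_gr \<alpha> \<beta>)"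

lemma is_lead_exp_unique: "is_lead_exp f \<alpha> \<Longrightarrow> is_lead_exp f \<beta> \<Longrightarrow> \<alpha> = \<beta>"
  unfolding is_lead_exp_def ds_gr_iff_ds_key_less using less_asym by blast

lemma LE3_eqI: "is_lead_exp f \<alpha> \<Longrightarrow> LE3 f = \<alpha>"
  unfolding LE3_def is_lead_exp_def[symmetric] using is_lead_exp_unique by blast

lemma is_lead_exp_LE3:
  assumes "f \<noteq> 0"
  shows "is_lead_exp f (LE3 f)"
proof -
  define S where "S = {\<alpha>. coeff3 f \<alpha> \<noteq> 0}"
  have "S \<noteq> {}"
    using assms coeff3_eq_0_iff unfolding S_def by blast
  then obtain \<alpha> where "\<alpha> \<in> S" and \<alpha>: "ds_key \<alpha> = (LEAST k. k \<in> ds_key ` S)"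
    by (metis (mono_tags, lifting) LeastI_ex empty_is_image ex_in_conv imageE)
  have "ds_key \<alpha> < ds_key \<beta>" if "\<beta> \<in> S" "\<beta> \<noteq> \<alpha>" for \<beta>
    using that \<alpha> Least_le[of "\<lambda>k. k \<in> ds_key ` S" "ds_key \<beta>"] inj_ds_key
    by (metis image_eqI injD order_le_neq_trans)
  with \<open>\<alpha> \<in> S\<close> have "is_lead_exp f \<alpha>"
    by (auto simp: is_lead_exp_def S_def ds_gr_iff_ds_key_less)
  then show ?thesis
    using LE3_eqI by metis
qed

lemma weight_eq_of_contributing:
  assumes "(p, q, r) = (a, b, c) \<or> ds_gr (a, b, c) (p, q, r)" and "b + c \<le> 2"
    and "weight (p, q, r) \<le> n" and "25 dvd n - weight (p, q, r)"
    and "n = weight (a, b, c) \<or> n = weight (a, b, c) + 25"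
  shows "weight (p, q, r) = weight (a, b, c)"
proof -
  let ?v = "weight (p, q, r)" and ?w = "weight (a, b, c)"
  have "a + b + c \<le> p + q + r"
    using assms(1) by (auto simp: ds_gr_def)
  then have window: "?w \<le> ?v + 8"
    using assms(2) by (simp add: weight_def)
  obtain k where k: "n - ?v = 25 * k"
    using assms(4) by (elim dvdE)
  have "even ?v" "even ?w"
    by (simp_all add: weight_def)
  from assms(5) show ?thesis
  proof
    assume "n = ?w"
    then have "25 * k \<le> 8"
      using k window by linarith
    then have "k = 0"
      by presburger
    then show ?thesis
      using k assms(3) \<open>n = ?w\<close> by simp
  next
    assume n: "n = ?w + 25"
    then have "25 * k \<le> 33"
      using k window by linarith
    then have "k = 0 \<or> k = 1"
      by presburger
    moreover have "k \<noteq> 0"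
    proof
      assume "k = 0"
      then have "?v = ?w + 25"
        using k n assms(3) by simp
      with \<open>even ?v\<close> \<open>even ?w\<close> show False
        by simp
    qed
    ultimately show ?thesis
      using k n assms(3) by simp
  qed
qed

lemma ds_below_same_weight:
  assumes "ds_gr (a, b, c) \<gamma>" and "b + c \<le> 2" and "weight \<gamma> = weight (a, b, c)"
  shows "\<gamma> \<in> {(a + 1, 0, 1), (a + 2, 1, 0), (a + 3, 0, 0)}"
proof (cases \<gamma>)
  case (fields p q r)
  define e where "e = (p + q + r) - (a + b + c)"
  have deg: "p + q + r = a + b + c + e"
    using assms(1) by (auto simp: fields ds_gr_def e_def)
  have w: "3 * e + q + 2 * r = b + 2 * c"
    using assms(3) deg by (simp add: fields weight_def)
  then have "e = 0 \<or> e = 1"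
    using assms(2) by presburger
  then show ?thesis
    using assms(1,2) deg w by (auto simp: fields ds_gr_def)
qed

lemma kernel_weight_slice_sums:
  assumes "rho f = 0" and "finite T" and weight: "\<And>\<gamma>. \<gamma> \<in> T \<Longrightarrow> weight \<gamma> = w"
    and support: "\<And>\<gamma> n. coeff3 f \<gamma> * fps_nth (rho_mon \<gamma>) n \<noteq> 0 \<Longrightarrow>
      n = w \<or> n = w + 25 \<Longrightarrow> \<gamma> \<in> T"
  shows "(\<Sum>\<gamma>\<in>T. coeff3 f \<gamma>) = 0" and "(\<Sum>\<gamma>\<in>T. of_nat (fst \<gamma>) * coeff3 f \<gamma>) = 0"
proof -
  have at_w: "fps_nth (rho_mon \<gamma> :: 'a fps) w = 1"
    and at_w25: "fps_nth (rho_mon \<gamma> :: 'a fps) (w + 25) = of_nat (fst \<gamma>)" if "\<gamma> \<in> T" for \<gamma>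
    using weight[OF that] by (simp_all add: fps_nth_rho_mon)
  have "fps_nth (rho f) w = (\<Sum>\<gamma>\<in>T. coeff3 f \<gamma> * fps_nth (rho_mon \<gamma>) w)"
    using assms(2) by (rule fps_nth_rho_eq_sum) (erule support, simp)
  also have "\<dots> = (\<Sum>\<gamma>\<in>T. coeff3 f \<gamma>)"
    by (rule sum.cong) (simp_all add: at_w)
  finally show "(\<Sum>\<gamma>\<in>T. coeff3 f \<gamma>) = 0"
    using assms(1) by simp
  have "fps_nth (rho f) (w + 25) = (\<Sum>\<gamma>\<in>T. coeff3 f \<gamma> * fps_nth (rho_mon \<gamma>) (w + 25))"
    using assms(2) by (rule fps_nth_rho_eq_sum) (erule support, simp)
  also have "\<dots> = (\<Sum>\<gamma>\<in>T. of_nat (fst \<gamma>) * coeff3 f \<gamma>)"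
    by (rule sum.cong) (simp_all add: at_w25 mult.commute)
  finally show "(\<Sum>\<gamma>\<in>T. of_nat (fst \<gamma>) * coeff3 f \<gamma>) = 0"
    using assms(1) by simp
qed

lemma lead_exp_contributors:
  fixes f :: "'a::comm_ring_1 ps3"
  assumes lead: "is_lead_exp f (a, b, c)" and "b + c \<le> 2"
    and "coeff3 f \<gamma> * fps_nth (rho_mon \<gamma>) n \<noteq> 0"
    and "n = weight (a, b, c) \<or> n = weight (a, b, c) + 25"
  shows "\<gamma> = (a, b, c) \<or> \<gamma> \<in> {(a + 1, 0, 1), (a + 2, 1, 0), (a + 3, 0, 0)}"
    and "weight \<gamma> = weight (a, b, c)"
proof -
  obtain p q r where \<gamma>: "\<gamma> = (p, q, r)"
    by (cases \<gamma>)
  from assms(3) have "coeff3 f \<gamma> \<noteq> 0" and "fps_nth (rho_mon \<gamma> :: 'a fps) n \<noteq> 0"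
    by auto
  then have below: "\<gamma> = (a, b, c) \<or> ds_gr (a, b, c) \<gamma>"
    and window: "weight \<gamma> \<le> n" "25 dvd n - weight \<gamma>"
    using lead unfolding is_lead_exp_def fps_nth_rho_mon by (metis (full_types))+
  show "weight \<gamma> = weight (a, b, c)"
    using weight_eq_of_contributing[of p q r a b c n] below assms(2,4) window unfolding \<gamma> by blast
  with below assms(2) show "\<gamma> = (a, b, c) \<or> \<gamma> \<in> {(a + 1, 0, 1), (a + 2, 1, 0), (a + 3, 0, 0)}"
    using ds_below_same_weight[of a b c \<gamma>] by blast
qed

lemma kernel_lead_exp_yz_degree:
  fixes f :: "'a::field ps3"
  assumes "rho f = 0" and lead: "is_lead_exp f (a, b, c)"
    and "(2::'a) \<noteq> 0" and "(3::'a) \<noteq> 0"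
  shows "3 \<le> b + c"
proof (rule ccontr)
  assume "\<not> 3 \<le> b + c"
  then have small: "b + c \<le> 2" by simp
  define C where
    "C = {\<gamma> \<in> {(a + 1, 0, 1), (a + 2, 1, 0), (a + 3, 0, 0)}. weight \<gamma> = weight (a, b, c)}"
  have "finite (insert (a, b, c) C)"
    by (simp add: C_def)
  moreover have "weight \<gamma> = weight (a, b, c)" if "\<gamma> \<in> insert (a, b, c) C" for \<gamma>
    using that by (auto simp: C_def)
  moreover have "\<gamma> \<in> insert (a, b, c) C"
    if "coeff3 f \<gamma> * fps_nth (rho_mon \<gamma>) n \<noteq> 0"
      and "n = weight (a, b, c) \<or> n = weight (a, b, c) + 25"
    for \<gamma> n
    using lead_exp_contributors[OF lead small that] by (auto simp: C_def)
  ultimately have sum0: "(\<Sum>\<gamma>\<in>insert (a, b, c) C. coeff3 f \<gamma>) = 0"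
    and sum1: "(\<Sum>\<gamma>\<in>insert (a, b, c) C. of_nat (fst \<gamma>) * coeff3 f \<gamma>) = 0"
    using kernel_weight_slice_sums[OF assms(1)] by blast+
  have "coeff3 f (a, b, c) = 0"
  proof (cases "C = {}")
    case True
    then show ?thesis
      using sum0 by simp
  next
    case False
    then obtain \<beta> where "\<beta> \<in> C"
      by blast
    then have C: "C = {\<beta>}" and shift: "fst \<beta> = a + 1 \<or> fst \<beta> = a + 2 \<or> fst \<beta> = a + 3"
      by (auto simp: C_def weight_def)
    then have "\<beta> \<noteq> (a, b, c)"
      by auto
    then have "coeff3 f \<beta> = - coeff3 f (a, b, c)"
      and "of_nat a * coeff3 f (a, b, c) + of_nat (fst \<beta>) * coeff3 f \<beta> = 0"
      using sum0 sum1 by (simp_all add: C eq_neg_iff_add_eq_0 add.commute)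
    then have "(of_nat (fst \<beta>) - of_nat a) * coeff3 f (a, b, c) = 0"
      by (auto simp: algebra_simps)
    moreover have "(of_nat (fst \<beta>) - of_nat a :: 'a) \<noteq> 0"
      using shift assms(3,4) by auto
    ultimately show ?thesis
      by simp
  qed
  then show False
    using lead by (simp add: is_lead_exp_def)
qed

lemma module_times: "module ((*) :: 'a::comm_ring_1 \<Rightarrow> 'a \<Rightarrow> 'a)"
  by unfold_locales (simp_all add: algebra_simps)

lemma ideal_gen_mono: "A \<subseteq> B \<Longrightarrow> ideal_gen A \<subseteq> ideal_gen B"
  unfolding ideal_gen_def by (rule module.span_mono[OF module_times])

lemma mult_in_ideal_gen: "x \<in> A \<Longrightarrow> y * x \<in> ideal_gen A"
  unfolding ideal_gen_def
  by (intro module.span_scale[OF module_times] module.span_base[OF module_times])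

lemma ideal_gen_eqI:
  assumes "A \<subseteq> B" and "B \<subseteq> ideal_gen A"
  shows "ideal_gen A = ideal_gen B"
proof
  show "ideal_gen A \<subseteq> ideal_gen B"
    using assms(1) by (rule ideal_gen_mono)
  have "ideal_gen B \<subseteq> ideal_gen (ideal_gen A)"
    using assms(2) by (rule ideal_gen_mono)
  then show "ideal_gen B \<subseteq> ideal_gen A"
    unfolding ideal_gen_def by (simp add: module.span_span[OF module_times])
qed

lemma mon3_mult: "mon3 (a, b, c) * mon3 (p, q, r) = mon3 (a + p, b + q, c + r)"
  by (simp add: mon3_def power_add mult_ac)

lemma mon3_in_ideal_gen:
  assumes "mon3 (p, q, r) \<in> M" and "p \<le> a" "q \<le> b" "r \<le> c"
  shows "mon3 (a, b, c) \<in> ideal_gen M"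
proof -
  have "mon3 (a, b, c) = mon3 (a - p, b - q, c - r) * mon3 (p, q, r)"
    using assms(2-4) by (simp add: mon3_mult)
  then show ?thesis
    using assms(1) mult_in_ideal_gen by metis
qed

definition yz_cubics :: "'a::comm_ring_1 ps3 set" where
  "yz_cubics = {mon3 (0, 3, 0), mon3 (0, 2, 1), mon3 (0, 1, 2), mon3 (0, 0, 3)}"

lemma mon3_in_ideal_gen_yz_cubics:
  assumes "3 \<le> b + c"
  shows "mon3 (a, b, c) \<in> ideal_gen yz_cubics"
proof -
  have "b \<ge> 3 \<or> b = 2 \<and> c \<ge> 1 \<or> b = 1 \<and> c \<ge> 2 \<or> b = 0 \<and> c \<ge> 3"
    using assms by arith
  then show ?thesis
    by (elim disjE conjE) (auto intro: mon3_in_ideal_gen simp: yz_cubics_def)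
qed

lemma lead_monomials_Pker:
  assumes "(2::'a::field) \<noteq> 0" and "(3::'a) \<noteq> 0"
  shows "{LM3 f | f. f \<in> (Pker :: 'a ps3 set) \<and> f \<noteq> 0} \<subseteq> ideal_gen yz_cubics"
proof clarify
  fix f :: "'a ps3"
  assume "f \<in> Pker" and "f \<noteq> 0"
  obtain a b c where abc: "LE3 f = (a, b, c)"
    by (cases "LE3 f") auto
  with \<open>f \<noteq> 0\<close> have "is_lead_exp f (a, b, c)"
    using is_lead_exp_LE3 by metis
  with \<open>f \<in> Pker\<close> assms have "3 \<le> b + c"
    by (intro kernel_lead_exp_yz_degree) (auto simp: Pker_def)
  then show "LM3 f \<in> ideal_gen yz_cubics"
    by (simp add: LM3_def abc mon3_in_ideal_gen_yz_cubics)
qed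

lemma f1_eq: "f1 = 3 * mon3 (0,3,0) - 4 * mon3 (1,1,1) + mon3 (4,0,0) - 3 * mon3 (0,3,5)
    - 2 * mon3 (1,6,2) - mon3 (2,4,3)"
  by (simp add: f1_def mon3_def mult_ac)

lemma f2_eq: "f2 = 2 * mon3 (0,2,1) - 3 * mon3 (1,0,2) + mon3 (3,1,0) - 2 * mon3 (0,7,2)
    - mon3 (1,5,3)"
  by (simp add: f2_def mon3_def mult_ac)

lemma f3_eq: "f3 = mon3 (0,1,2) - 3 * mon3 (2,2,0) + 2 * mon3 (3,0,1) - mon3 (0,6,3)
    - 2 * mon3 (1,4,4)"
  by (simp add: f3_def mon3_def mult_ac)

lemma f4_eq: "f4 = mon3 (0,0,3) - 2 * mon3 (1,3,0) + mon3 (2,1,1) - mon3 (0,5,4)"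
  by (simp add: f4_def mon3_def mult_ac)

lemma rho_f1: "rho f1 = 0"
proof -
  let ?u = "fps_X ^ 25 :: 'a fps"
  have "rho f1 = fps_X ^ 24 * (3 - 4 * (1 + ?u) + (1 + ?u) ^ 4 - 3 * ?u ^ 2
      - 2 * ?u ^ 2 * (1 + ?u) - ?u ^ 2 * (1 + ?u) ^ 2)"
    by (simp add: f1_eq rho_linear rho_mon_eq weight_def algebra_simps flip: power_add power_mult)
  also have "\<dots> = 0"
    by (simp add: algebra_simps power2_eq_square power3_eq_cube power4_eq_xxxx)
  finally show ?thesis .
qed

lemma rho_f2: "rho f2 = 0"
proof -
  let ?u = "fps_X ^ 25 :: 'a fps"
  have "rho f2 = fps_X ^ 26 * (2 - 3 * (1 + ?u) + (1 + ?u) ^ 3 - 2 * ?u ^ 2 - ?u ^ 2 * (1 + ?u))"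
    by (simp add: f2_eq rho_linear rho_mon_eq weight_def algebra_simps flip: power_add power_mult)
  also have "\<dots> = 0"
    by (simp add: algebra_simps power2_eq_square power3_eq_cube)
  finally show ?thesis .
qed

lemma rho_f3: "rho f3 = 0"
proof -
  let ?u = "fps_X ^ 25 :: 'a fps"
  have "rho f3 = fps_X ^ 28 * (1 - 3 * (1 + ?u) ^ 2 + 2 * (1 + ?u) ^ 3 - ?u ^ 2 - 2 * ?u ^ 2 * (1 + ?u))"
    by (simp add: f3_eq rho_linear rho_mon_eq weight_def algebra_simps flip: power_add power_mult)
  also have "\<dots> = 0"
    by (simp add: algebra_simps power2_eq_square power3_eq_cube)
  finally show ?thesis .
qed

lemma rho_f4: "rho f4 = 0"
proof -
  let ?u = "fps_X ^ 25 :: 'a fps"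
  have "rho f4 = fps_X ^ 30 * (1 - 2 * (1 + ?u) + (1 + ?u) ^ 2 - ?u ^ 2)"
    by (simp add: f4_eq rho_linear rho_mon_eq weight_def algebra_simps flip: power_add power_mult)
  also have "\<dots> = 0"
    by (simp add: algebra_simps power2_eq_square)
  finally show ?thesis .
qed


lemma is_lead_exp_f1: "(3::'a::comm_ring_1) \<noteq> 0 \<Longrightarrow> is_lead_exp (f1 :: 'a ps3) (0,3,0)"
  by (auto simp: is_lead_exp_def f1_eq coeff3_linear ds_gr_def split: if_splits)

lemma is_lead_exp_f2: "(2::'a::comm_ring_1) \<noteq> 0 \<Longrightarrow> is_lead_exp (f2 :: 'a ps3) (0,2,1)"
  by (auto simp: is_lead_exp_def f2_eq coeff3_linear ds_gr_def split: if_splits)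

lemma is_lead_exp_f3: "is_lead_exp f3 (0,1,2)"
  by (auto simp: is_lead_exp_def f3_eq coeff3_linear ds_gr_def split: if_splits)

lemma is_lead_exp_f4: "is_lead_exp f4 (0,0,3)"
  by (auto simp: is_lead_exp_def f4_eq coeff3_linear ds_gr_def split: if_splits)

lemma lead_monomials_generators:
  assumes "(2::'a::comm_ring_1) \<noteq> 0" and "(3::'a) \<noteq> 0"
  shows "{LM3 g | g. g \<in> {f1 :: 'a ps3, f2, f3, f4} \<and> g \<noteq> 0} = yz_cubics"
proof -
  note lead = is_lead_exp_f1[OF assms(2)] is_lead_exp_f2[OF assms(1)]
    is_lead_exp_f3[where 'a='a] is_lead_exp_f4[where 'a='a]
  then have "f1 \<noteq> (0 :: 'a ps3)" "f2 \<noteq> (0 :: 'a ps3)" "f3 \<noteq> (0 :: 'a ps3)" "f4 \<noteq> (0 :: 'a ps3)"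
    by (auto simp: is_lead_exp_def coeff3_eq_0_iff[symmetric])
  then have "{LM3 g | g. g \<in> {f1 :: 'a ps3, f2, f3, f4} \<and> g \<noteq> 0} = {LM3 f1, LM3 f2, LM3 f3, LM3 f4}"
    by blast
  moreover have "LM3 f1 = (mon3 (0, 3, 0) :: 'a ps3)" "LM3 f2 = (mon3 (0, 2, 1) :: 'a ps3)"
    "LM3 f3 = (mon3 (0, 1, 2) :: 'a ps3)" "LM3 f4 = (mon3 (0, 0, 3) :: 'a ps3)"
    unfolding LM3_def using lead by (simp_all only: LE3_eqI)
  ultimately show ?thesis
    by (simp add: yz_cubics_def)
qed

lemma of_nat_neq_0_below_char:
  assumes "0 < n" and "CHAR('a::semiring_1) = 0 \<or> n < CHAR('a)"
  shows "(of_nat n :: 'a) \<noteq> 0"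
  using assms by (auto simp: of_nat_eq_0_iff_char_dvd dest: dvd_imp_le)

theorem mainTheorem10:
  assumes "CHAR('a::field) = 0 \<or> CHAR('a) \<ge> 5"
  shows "standard_basis {f1 :: 'a ps3, f2, f3, f4} Pker"
proof -
  have two: "(2::'a) \<noteq> 0" and three: "(3::'a) \<noteq> 0"
    using of_nat_neq_0_below_char[of 2, where 'a='a] of_nat_neq_0_below_char[of 3, where 'a='a] assms
    by auto
  have F: "{f1, f2, f3, f4} \<subseteq> (Pker :: 'a ps3 set)"
    by (simp add: Pker_def rho_f1 rho_f2 rho_f3 rho_f4)
  have "{LM3 g | g. g \<in> {f1, f2, f3, f4} \<and> g \<noteq> 0} \<subseteq> {LM3 f | f. f \<in> (Pker :: 'a ps3 set) \<and> f \<noteq> 0}"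
    using F by blast
  then have "ideal_gen {LM3 g | g. g \<in> {f1, f2, f3, f4} \<and> g \<noteq> 0}
      = ideal_gen {LM3 f | f. f \<in> (Pker :: 'a ps3 set) \<and> f \<noteq> 0}"
    using lead_monomials_Pker[OF two three] unfolding lead_monomials_generators[OF two three]
    by (rule ideal_gen_eqI)
  with F show ?thesis
    by (simp add: standard_basis_def)
qed

end
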